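(* Let $F:\mathbb{R}^2\to\mathbb{R}^2$ be a CPwL map with $F(E(t))=E(r(t))$ for all $t\in[0,1]$, let $\mathcal E(x,y)=(E(x),E(y))$ and $\mathcal F(z_1,z_2)=(F(z_1),F(z_2))$, and set $z_n(x,y)=\mathcal F^n(\mathcal E(x,y))$ for $(x,y)\in[0,1]^2$. Then there exist constants $C_0,C_1>0$, depending only on the piecewise-affine complexities of $E$ and $F$, such that $z_n$ (as a function on $[0,1]^2$) is the restriction of a network in $\Upsilon_{C_0,\,C_1n}(\mathrm{ReLU};2,4)$ for every $n\ge0$.
   Context: For integers $W,L,d,N\ge 1$, $\Upsilon_{W,L}(\mathrm{ReLU};d,N)$ denotes the set of functions $\mathbb{R}^d\to\mathbb{R}^N$ realized (exactly) by fully connected feed-forward ReLU networks of width $W$ and depth $L$. CPwL means continuous piecewise linear. $r:[0,1]\to[0,1]$ is $r(t)=2t-\lfloor 2t\rfloor$ for $t\in[0,1)$, $r(1)=1$. $E:[0,1]\to\mathbb{R}^2$ is $E(t)=(3t,3t)$ for $0\le t\le\frac13$, $E(t)=(1,2-3t)$ for $\frac13\le t\le\frac23$, $E(t)=(3-3t,0)$ for $\frac23\le t\le1$. *)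

theory Defs
  imports "HOL-Analysis.Analysis"
begin

text \<open>Vectors of R^k are represented as functions nat => real, only the
  indices below k being relevant.  A layer is a pair (A, b) of a weight
  matrix A (as nat => nat => real) and a bias b.\<close>

definition affine_map :: "nat \<Rightarrow> (nat \<Rightarrow> nat \<Rightarrow> real) \<Rightarrow> (nat \<Rightarrow> real) \<Rightarrow> (nat \<Rightarrow> real) \<Rightarrow> (nat \<Rightarrow> real)" where
  "affine_map m A b x = (\<lambda>i. (\<Sum>j<m. A i j * x j) + b i)"

definition relu_vec :: "(nat \<Rightarrow> real) \<Rightarrow> (nat \<Rightarrow> real)" where
  "relu_vec v = (\<lambda>i. max 0 (v i))"

fun hidden_eval :: "nat \<Rightarrow> nat \<Rightarrow> ((nat \<Rightarrow> nat \<Rightarrow> real) \<times> (nat \<Rightarrow> real)) list \<Rightarrow> (nat \<Rightarrow> real) \<Rightarrow> (nat \<Rightarrow> real)" where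
  "hidden_eval d W [] x = x"
| "hidden_eval d W ((A, b) # ls) x = hidden_eval W W ls (relu_vec (affine_map d A b x))"

definition relu_net :: "nat \<Rightarrow> nat \<Rightarrow> nat \<Rightarrow> ((nat \<Rightarrow> nat \<Rightarrow> real) \<times> (nat \<Rightarrow> real)) list
    \<Rightarrow> (nat \<Rightarrow> nat \<Rightarrow> real) \<Rightarrow> (nat \<Rightarrow> real) \<Rightarrow> (nat \<Rightarrow> real) \<Rightarrow> (nat \<Rightarrow> real)" where
  "relu_net d W N ls Aout bout x =
     (\<lambda>i. if i < N then affine_map (if ls = [] then d else W) Aout bout (hidden_eval d W ls x) i else 0)"

definition Upsilon :: "nat \<Rightarrow> nat \<Rightarrow> nat \<Rightarrow> nat \<Rightarrow> ((nat \<Rightarrow> real) \<Rightarrow> (nat \<Rightarrow> real)) set" where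
  "Upsilon W L d N = {g. \<exists>ls Aout bout. length ls = L \<and> g = relu_net d W N ls Aout bout}"

definition cpwl_pieces :: "('a::euclidean_space \<Rightarrow> 'b::euclidean_space) \<Rightarrow> nat \<Rightarrow> bool" where
  "cpwl_pieces f k \<longleftrightarrow> continuous_on UNIV f \<and>
     (\<exists>P. finite P \<and> card P \<le> k \<and> \<Union>P = UNIV \<and>
        (\<forall>S\<in>P. polyhedron S \<and> (\<exists>g c. linear g \<and> (\<forall>x\<in>S. f x = g x + c))))"

definition cpwl :: "('a::euclidean_space \<Rightarrow> 'b::euclidean_space) \<Rightarrow> bool" where
  "cpwl f \<longleftrightarrow> (\<exists>k. cpwl_pieces f k)"

definition r_map :: "real \<Rightarrow> real" where
  "r_map t = (if t = 1 then 1 else 2 * t - of_int \<lfloor>2 * t\<rfloor>)"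

definition E_map :: "real \<Rightarrow> real^2" where
  "E_map t = (if t \<le> 1/3 then vector [3 * t, 3 * t]
              else if t \<le> 2/3 then vector [1, 2 - 3 * t]
              else vector [3 - 3 * t, 0])"

definition z_n :: "(real^2 \<Rightarrow> real^2) \<Rightarrow> nat \<Rightarrow> real \<Rightarrow> real \<Rightarrow> (nat \<Rightarrow> real)" where
  "z_n F n x y = (\<lambda>i. if i = 0 then ((F ^^ n) (E_map x)) $ 1
                     else if i = 1 then ((F ^^ n) (E_map x)) $ 2
                     else if i = 2 then ((F ^^ n) (E_map y)) $ 1
                     else if i = 3 then ((F ^^ n) (E_map y)) $ 2
                     else 0)"

definition input2 :: "real \<Rightarrow> real \<Rightarrow> (nat \<Rightarrow> real)" where
  "input2 x y = (\<lambda>i. if i = 0 then x else if i = 1 then y else 0)"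

end

theory Submission
  imports Defs
begin

text \<open>Only the relation F \<circ> E = E \<circ> r matters: by induction,
  z_n(x, y) = (E(r^n x), E(r^n y)). Let t \<mapsto> (c, s) run once, at constant speed and starting
  at (1, 0), around the unit circle |c| + |s| = 1 of the l1 norm (a diamond). In these
  coordinates r becomes the angle doubling (c, s) \<mapsto> (|c| - |s|, |c + s| - |c - s|), a piecewise
  linear analogue of (c^2 - s^2, 2 c s), and one ReLU layer applies it to the eight values
  relu(\<plusminus>c), relu(\<plusminus>s), relu(\<plusminus>(c + s)), relu(\<plusminus>(c - s)), from which c, s, |c|, |s|,
  |c \<plusminus> s| are all linear. Two layers produce these features from t, n layers double, and three
  layers read off E, which on the diamond is a min/max of affine functions of (c, s). So E \<circ> r^n
  has a network of width 8 and depth n + 5 \<le> 6 n, and two copies side by side give z_n.\<close>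

definition relu_layer :: "nat \<Rightarrow> (nat \<Rightarrow> nat \<Rightarrow> real) \<times> (nat \<Rightarrow> real) \<Rightarrow> (nat \<Rightarrow> real) \<Rightarrow> nat \<Rightarrow> real" where
  "relu_layer m L u = relu_vec (affine_map m (fst L) (snd L) u)"

lemma relu_layer_nonneg: "relu_layer m L u i \<ge> 0"
  by (simp add: relu_layer_def relu_vec_def)

lemma hidden_eval_Cons: "hidden_eval d W (L # ls) x = hidden_eval W W ls (relu_layer d L x)"
  by (cases L) (simp add: relu_layer_def)

lemma hidden_eval_eq_fold: "hidden_eval W W ls u = fold (relu_layer W) ls u"
  by (induction ls arbitrary: u) (simp_all add: hidden_eval_Cons)

lemma hidden_eval_append:
  "ls \<noteq> [] \<Longrightarrow> hidden_eval d W (ls @ ms) x = hidden_eval W W ms (hidden_eval d W ls x)"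
  by (cases ls) (simp_all add: hidden_eval_Cons hidden_eval_eq_fold)

lemma hidden_eval_nonneg: "ls \<noteq> [] \<Longrightarrow> hidden_eval d W ls x i \<ge> 0"
proof (induction ls arbitrary: d x)
  case (Cons L ls)
  then show ?case
    by (cases "ls = []") (simp_all add: hidden_eval_Cons relu_layer_nonneg)
qed simp

definition identity_layer :: "nat \<Rightarrow> (nat \<Rightarrow> nat \<Rightarrow> real) \<times> (nat \<Rightarrow> real)" where
  "identity_layer W = ((\<lambda>i j. if i = j then 1 else 0), (\<lambda>_. 0))"

lemma relu_layer_identity:
  assumes "\<forall>j. u j \<ge> 0"
  shows "relu_layer W (identity_layer W) u = (\<lambda>i. if i < W then u i else 0)"
  using assms by (auto simp: relu_layer_def identity_layer_def affine_map_def relu_vec_def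
      if_distrib[of "\<lambda>x. x * _"] max_def cong: if_cong)

lemma affine_map_after_identity_layers:
  assumes "\<forall>j. u j \<ge> 0"
  shows "affine_map W A b (hidden_eval W W (replicate k (identity_layer W)) u) = affine_map W A b u"
  using assms
proof (induction k arbitrary: u)
  case (Suc k)
  let ?v = "relu_layer W (identity_layer W) u"
  have "affine_map W A b (hidden_eval W W (replicate k (identity_layer W)) ?v) = affine_map W A b ?v"
    using Suc.IH relu_layer_nonneg by blast
  also have "\<dots> = affine_map W A b u"
    using Suc.prems by (simp add: relu_layer_identity affine_map_def)
  finally show ?case
    by (simp add: hidden_eval_Cons)
qed simp

text \<open>Padding with identity layers needs L \<ge> 1: they preserve only nonnegative vectors.\<close>

lemma Upsilon_depth_mono:
  assumes "1 \<le> L" "L \<le> L'"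
  shows "Upsilon W L d N \<subseteq> Upsilon W L' d N"
proof
  fix g
  assume "g \<in> Upsilon W L d N"
  then obtain ls A b where ls: "length ls = L" and g: "g = relu_net d W N ls A b"
    by (auto simp: Upsilon_def)
  define ls' where "ls' = ls @ replicate (L' - L) (identity_layer W)"
  have "ls \<noteq> []"
    using ls assms by auto
  then have "affine_map W A b (hidden_eval d W ls' x) = affine_map W A b (hidden_eval d W ls x)"
    for x by (simp add: ls'_def hidden_eval_append hidden_eval_nonneg affine_map_after_identity_layers)
  then have "relu_net d W N ls' A b = g"
    using \<open>ls \<noteq> []\<close> by (intro ext) (simp add: g relu_net_def ls'_def)
  moreover have "length ls' = L'"
    using ls assms by (simp add: ls'_def)
  ultimately show "g \<in> Upsilon W L' d N"
    by (auto simp: Upsilon_def)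
qed

definition stack :: "nat \<Rightarrow> (nat \<Rightarrow> real) \<Rightarrow> (nat \<Rightarrow> real) \<Rightarrow> nat \<Rightarrow> real" where
  "stack m u v i = (if i < m then u i else if i < 2 * m then v (i - m) else 0)"

definition block_diag :: "nat \<Rightarrow> nat \<Rightarrow> (nat \<Rightarrow> nat \<Rightarrow> real) \<Rightarrow> nat \<Rightarrow> nat \<Rightarrow> real" where
  "block_diag n m A i j =
     (if i < n \<and> j < m then A i j
      else if n \<le> i \<and> i < 2 * n \<and> m \<le> j \<and> j < 2 * m then A (i - n) (j - m) else 0)"

lemma sum_lessThan_double:
  fixes f :: "nat \<Rightarrow> 'a::comm_monoid_add"
  shows "(\<Sum>j<2 * m. f j) = (\<Sum>j<m. f j) + (\<Sum>j<m. f (j + m))"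
proof -
  have "(\<Sum>j<2 * m. f j) = (\<Sum>j<m. f j) + (\<Sum>j\<in>{m..<m + m}. f j)"
    by (simp add: mult_2 lessThan_atLeast0 sum.atLeastLessThan_concat)
  also have "(\<Sum>j\<in>{m..<m + m}. f j) = (\<Sum>j<m. f (j + m))"
    using sum.shift_bounds_nat_ivl[of f 0 m m] by (simp add: lessThan_atLeast0)
  finally show ?thesis .
qed

lemma affine_map_block_diag:
  "affine_map (2 * m) (block_diag n m A) (stack n b b) (stack m u v) =
   stack n (affine_map m A b u) (affine_map m A b v)"
  by (auto simp: affine_map_def sum_lessThan_double block_diag_def stack_def)

lemma relu_vec_stack: "relu_vec (stack m u v) = stack m (relu_vec u) (relu_vec v)"
  by (auto simp: relu_vec_def stack_def)

definition parallel_layer ::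
  "nat \<Rightarrow> nat \<Rightarrow> (nat \<Rightarrow> nat \<Rightarrow> real) \<times> (nat \<Rightarrow> real) \<Rightarrow> (nat \<Rightarrow> nat \<Rightarrow> real) \<times> (nat \<Rightarrow> real)"
  where "parallel_layer n m L = (block_diag n m (fst L), stack n (snd L) (snd L))"

lemma relu_layer_parallel:
  "relu_layer (2 * m) (parallel_layer n m L) (stack m u v) =
   stack n (relu_layer m L u) (relu_layer m L v)"
  by (simp add: relu_layer_def parallel_layer_def affine_map_block_diag relu_vec_stack)

fun parallel_layers ::
  "nat \<Rightarrow> nat \<Rightarrow> ((nat \<Rightarrow> nat \<Rightarrow> real) \<times> (nat \<Rightarrow> real)) list \<Rightarrow>
   ((nat \<Rightarrow> nat \<Rightarrow> real) \<times> (nat \<Rightarrow> real)) list" where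
  "parallel_layers d W [] = []"
| "parallel_layers d W (L # ls) = parallel_layer W d L # map (parallel_layer W W) ls"

lemma length_parallel_layers [simp]: "length (parallel_layers d W ls) = length ls"
  by (cases ls) simp_all

lemma parallel_layers_eq_Nil_iff [simp]: "parallel_layers d W ls = [] \<longleftrightarrow> ls = []"
  by (cases ls) simp_all

lemma fold_relu_layer_parallel:
  "fold (relu_layer (2 * W)) (map (parallel_layer W W) ls) (stack W u v) =
   stack W (fold (relu_layer W) ls u) (fold (relu_layer W) ls v)"
  by (induction ls arbitrary: u v) (simp_all add: relu_layer_parallel)

lemma hidden_eval_parallel_layers:
  "hidden_eval (2 * d) (2 * W) (parallel_layers d W ls) (stack d u v) =
   stack (if ls = [] then d else W) (hidden_eval d W ls u) (hidden_eval d W ls v)"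
  by (cases ls) (simp_all add: hidden_eval_Cons hidden_eval_eq_fold relu_layer_parallel
      fold_relu_layer_parallel)

lemma Upsilon_parallel:
  assumes "g \<in> Upsilon W L d N"
  shows "\<exists>h \<in> Upsilon (2 * W) L (2 * d) (2 * N). \<forall>u v. h (stack d u v) = stack N (g u) (g v)"
proof -
  obtain ls A b where ls: "length ls = L" and g: "g = relu_net d W N ls A b"
    using assms by (auto simp: Upsilon_def)
  define m where "m = (if ls = [] then d else W)"
  define h where
    "h = relu_net (2 * d) (2 * W) (2 * N) (parallel_layers d W ls) (block_diag N m A) (stack N b b)"
  have "h \<in> Upsilon (2 * W) L (2 * d) (2 * N)"
    unfolding Upsilon_def h_def using ls length_parallel_layers by blast
  moreover have "h (stack d u v) = stack N (g u) (g v)" for u v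
  proof -
    have dim: "(if parallel_layers d W ls = [] then 2 * d else 2 * W) = 2 * m"
      by (simp add: m_def)
    have hidden: "hidden_eval (2 * d) (2 * W) (parallel_layers d W ls) (stack d u v) =
                  stack m (hidden_eval d W ls u) (hidden_eval d W ls v)"
      by (simp add: hidden_eval_parallel_layers m_def)
    have g_eq: "g w = (\<lambda>i. if i < N then affine_map m A b (hidden_eval d W ls w) i else 0)" for w
      unfolding g relu_net_def m_def ..
    show ?thesis
      unfolding h_def relu_net_def dim hidden affine_map_block_diag g_eq
      by (rule ext) (auto simp: stack_def)
  qed
  ultimately show ?thesis
    by blast
qed

lemma funpow_image_subset: "g ` S \<subseteq> S \<Longrightarrow> x \<in> S \<Longrightarrow> (g ^^ n) x \<in> S"
  by (induction n) auto

lemma funpow_semiconj: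
  assumes conj: "\<forall>x\<in>S. f (h x) = h (g x)" and inv: "g ` S \<subseteq> S" and "x \<in> S"
  shows "(f ^^ n) (h x) = h ((g ^^ n) x)"
proof -
  have orbit: "(g ^^ n) x \<in> S" for n
    using funpow_image_subset[OF inv \<open>x \<in> S\<close>] .
  show ?thesis
    by (induction n) (simp_all add: conj orbit)
qed

lemma r_map_lower_half: "0 \<le> t \<Longrightarrow> t < 1/2 \<Longrightarrow> r_map t = 2 * t"
  by (simp add: r_map_def floor_eq_iff)

lemma r_map_upper_half: "1/2 \<le> t \<Longrightarrow> t \<le> 1 \<Longrightarrow> r_map t = 2 * t - 1"
  by (cases "t = 1") (simp_all add: r_map_def floor_eq_iff)

lemma r_map_image: "r_map ` {0..1} \<subseteq> {0..1}"
proof (intro image_subsetI)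
  fix t :: real
  assume "t \<in> {0..1}"
  then show "r_map t \<in> {0..1}"
    by (cases "t < 1/2") (simp_all add: r_map_lower_half r_map_upper_half)
qed

definition diamond :: "real \<Rightarrow> real \<times> real" where
  "diamond t = (\<bar>4 * t - 2\<bar> - 1, max (1 - 4 * \<bar>t - 1/4\<bar>) (4 * t - 4))"

definition diamond_double :: "real \<times> real \<Rightarrow> real \<times> real" where
  "diamond_double = (\<lambda>(c, s). (\<bar>c\<bar> - \<bar>s\<bar>, \<bar>c + s\<bar> - \<bar>c - s\<bar>))"

lemma diamond_quarters:
  "0 \<le> t \<Longrightarrow> t \<le> 1/4 \<Longrightarrow> diamond t = (1 - 4 * t, 4 * t)"
  "1/4 \<le> t \<Longrightarrow> t \<le> 1/2 \<Longrightarrow> diamond t = (1 - 4 * t, 2 - 4 * t)"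
  "1/2 \<le> t \<Longrightarrow> t \<le> 3/4 \<Longrightarrow> diamond t = (4 * t - 3, 2 - 4 * t)"
  "3/4 \<le> t \<Longrightarrow> t \<le> 1 \<Longrightarrow> diamond t = (4 * t - 3, 4 * t - 4)"
  by (auto simp: diamond_def abs_if max_def)

lemma diamond_double_diamond:
  assumes "t \<in> {0..1}"
  shows "diamond_double (diamond t) = diamond (r_map t)"
proof -
  consider "t \<le> 1/8" | "1/8 \<le> t" "t \<le> 1/4" | "1/4 \<le> t" "t \<le> 3/8" | "3/8 \<le> t" "t < 1/2"
    | "1/2 \<le> t" "t \<le> 5/8" | "5/8 \<le> t" "t \<le> 3/4" | "3/4 \<le> t" "t \<le> 7/8" | "7/8 \<le> t"
    by linarith
  then show ?thesis
    using assms
    by cases (simp_all add: diamond_quarters r_map_lower_half r_map_upper_half diamond_double_def)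
qed

definition vec_of_list :: "real list \<Rightarrow> nat \<Rightarrow> real" where
  "vec_of_list xs j = (if j < length xs then xs ! j else 0)"

definition mat_of_rows :: "real list list \<Rightarrow> nat \<Rightarrow> nat \<Rightarrow> real" where
  "mat_of_rows M i = vec_of_list (if i < length M then M ! i else [])"

lemma sum_lessThan_8:
  fixes f :: "nat \<Rightarrow> real"
  shows "(\<Sum>j<8. f j) = f 0 + f 1 + f 2 + f 3 + f 4 + f 5 + f 6 + f 7"
  by (simp add: eval_nat_numeral)

lemma relu_layer_8:
  "relu_layer 8 (A, b) u k = max 0 (A k 0 * u 0 + A k 1 * u 1 + A k 2 * u 2 + A k 3 * u 3 +
     A k 4 * u 4 + A k 5 * u 5 + A k 6 * u 6 + A k 7 * u 7 + b k)"
  by (simp add: relu_layer_def affine_map_def relu_vec_def sum_lessThan_8)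

definition feature_c :: "nat \<Rightarrow> real" where
  "feature_c = vec_of_list [1, -1, 0, 0, 1, -1, 1, -1]"

definition feature_s :: "nat \<Rightarrow> real" where
  "feature_s = vec_of_list [0, 0, 1, -1, 1, -1, -1, 1]"

definition relu_features :: "real \<times> real \<Rightarrow> nat \<Rightarrow> real" where
  "relu_features p = relu_vec (\<lambda>k. feature_c k * fst p + feature_s k * snd p)"

definition feature_layer ::
  "(nat \<Rightarrow> real) \<Rightarrow> real \<Rightarrow> (nat \<Rightarrow> real) \<Rightarrow> real \<Rightarrow> (nat \<Rightarrow> nat \<Rightarrow> real) \<times> (nat \<Rightarrow> real)"
  where "feature_layer p p0 q q0 =
    ((\<lambda>k j. feature_c k * p j + feature_s k * q j), (\<lambda>k. feature_c k * p0 + feature_s k * q0))"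

lemma relu_layer_feature_layer:
  "relu_layer m (feature_layer p p0 q q0) u =
   relu_features ((\<Sum>j<m. p j * u j) + p0, (\<Sum>j<m. q j * u j) + q0)"
proof -
  have "(\<Sum>j<m. (feature_c k * p j + feature_s k * q j) * u j) =
        feature_c k * (\<Sum>j<m. p j * u j) + feature_s k * (\<Sum>j<m. q j * u j)" for k
    by (simp add: sum.distrib sum_distrib_left algebra_simps)
  then show ?thesis
    by (simp add: relu_layer_def feature_layer_def relu_features_def affine_map_def relu_vec_def
        algebra_simps)
qed

lemma relu_features_values:
  "relu_features (c, s) 0 = max 0 c" "relu_features (c, s) 1 = max 0 (- c)"
  "relu_features (c, s) 2 = max 0 s" "relu_features (c, s) 3 = max 0 (- s)"
  "relu_features (c, s) 4 = max 0 (c + s)" "relu_features (c, s) 5 = max 0 (- c - s)"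
  "relu_features (c, s) 6 = max 0 (c - s)" "relu_features (c, s) 7 = max 0 (s - c)"
  by (simp_all add: relu_features_def relu_vec_def feature_c_def feature_s_def vec_of_list_def)

lemma max_0_sub_max_0_neg: "max 0 x - max 0 (- x) = (x :: real)"
  by (simp add: max_def)

lemma max_0_add_max_0_neg: "max 0 x + max 0 (- x) = \<bar>x :: real\<bar>"
  by (simp add: max_def)

definition double_layer :: "(nat \<Rightarrow> nat \<Rightarrow> real) \<times> (nat \<Rightarrow> real)" where
  "double_layer = feature_layer (vec_of_list [1, 1, -1, -1]) 0 (vec_of_list [0, 0, 0, 0, 1, 1, -1, -1]) 0"

lemma relu_layer_double_layer:
  "relu_layer 8 double_layer (relu_features p) = relu_features (diamond_double p)"
proof -
  obtain c s where p: "p = (c, s)"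
    by fastforce
  have "max 0 (- c - s) = max 0 (- (c + s))" "max 0 (s - c) = max 0 (- (c - s))"
    by simp_all
  then show ?thesis
    using max_0_add_max_0_neg[of c] max_0_add_max_0_neg[of s]
      max_0_add_max_0_neg[of "c + s"] max_0_add_max_0_neg[of "c - s"]
    unfolding p double_layer_def relu_layer_feature_layer sum_lessThan_8 relu_features_values
    by (simp add: vec_of_list_def diamond_double_def diff_diff_eq)
qed

lemma relu_layer_scalar_input: "relu_layer 1 (A, b) (\<lambda>_. t) = (\<lambda>k. max 0 (A k 0 * t + b k))"
  by (simp add: relu_layer_def affine_map_def relu_vec_def)

definition encoder_layers :: "((nat \<Rightarrow> nat \<Rightarrow> real) \<times> (nat \<Rightarrow> real)) list" where
  "encoder_layers =
     [((\<lambda>k _. vec_of_list [4, -4, 1, 4, 4] k), vec_of_list [-2, 2, 0, -1, -3]),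
      feature_layer (vec_of_list [1, 1]) (-1) (vec_of_list [0, 0, 4, -2, 2]) 0]"

lemma hidden_eval_encoder_layers:
  assumes "t \<in> {0..1}"
  shows "hidden_eval 1 8 encoder_layers (\<lambda>_. t) = relu_features (diamond t)"
proof -
  have "diamond t = (max 0 (4 * t - 2) + max 0 (2 - 4 * t) - 1,
                     4 * max 0 t - 2 * max 0 (4 * t - 1) + 2 * max 0 (4 * t - 3))"
    using assms by (auto simp: diamond_def abs_if max_def)
  moreover have "hidden_eval 1 8 encoder_layers (\<lambda>_. t) =
    relu_layer 8 (feature_layer (vec_of_list [1, 1]) (-1) (vec_of_list [0, 0, 4, -2, 2]) 0)
      (\<lambda>k. max 0 (vec_of_list [4, -4, 1, 4, 4] k * t + vec_of_list [-2, 2, 0, -1, -3] k))"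
    by (simp only: encoder_layers_def hidden_eval_Cons hidden_eval.simps(1) relu_layer_scalar_input)
  ultimately show ?thesis
    by (simp add: relu_layer_feature_layer sum_lessThan_8 vec_of_list_def)
qed

definition E_of_diamond :: "real \<times> real \<Rightarrow> real^2" where
  "E_of_diamond = (\<lambda>(c, s). vector [min 1 (3 * (1 - c) / 4),
      max 0 (min (min (3 * (1 - c) / 4) ((2 + 3 * s) / 4)) (1 - c + s))])"

lemma E_of_diamond_diamond:
  assumes "t \<in> {0..1}"
  shows "E_of_diamond (diamond t) = E_map t"
proof -
  consider "t \<le> 1/4" | "1/4 \<le> t" "t \<le> 1/3" | "1/3 < t" "t \<le> 1/2" | "1/2 \<le> t" "t \<le> 2/3"
    | "2/3 < t" "t \<le> 3/4" | "3/4 \<le> t"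
    by linarith
  then show ?thesis
    using assms
    by cases (auto simp: diamond_quarters E_of_diamond_def E_map_def vec_eq_iff forall_2 min_def max_def)
qed

definition coords :: "real^2 \<Rightarrow> nat \<Rightarrow> real" where
  "coords p i = (if i = 0 then p $ 1 else if i = 1 then p $ 2 else 0)"

definition decoder_layers :: "((nat \<Rightarrow> nat \<Rightarrow> real) \<times> (nat \<Rightarrow> real)) list" where
  "decoder_layers =
     [(mat_of_rows [[3/4, -3/4], [-3/4, 3/4, -3/4, 3/4], [1], [0, 1], [0, 0, 1], [0, 0, 0, 1]],
       vec_of_list [1/4, 1/4]),
      (mat_of_rows [[1], [0, -1, -3/4, 3/4], [0, 1, 3/4, -3/4], [0, -1, 1/4, -1/4, -1, 1]],
       vec_of_list [0, 3/4, -3/4, -1/4]),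
      (mat_of_rows [[1], [0, 1, -1, -1]], vec_of_list [])]"

definition readout_matrix :: "nat \<Rightarrow> nat \<Rightarrow> real" where
  "readout_matrix = mat_of_rows [[-1], [0, 1]]"

definition readout_bias :: "nat \<Rightarrow> real" where
  "readout_bias = vec_of_list [1]"

lemma min_eq_sub_max_0: "min a b = a - max 0 (a - b :: real)"
  by (simp add: min_def max_def)

lemma decoder_layer_values:
  "relu_layer 8 (decoder_layers ! 0) u 0 = max 0 (3/4 * u 0 - 3/4 * u 1 + 1/4)"
  "relu_layer 8 (decoder_layers ! 0) u 1 = max 0 (- 3/4 * u 0 + 3/4 * u 1 - 3/4 * u 2 + 3/4 * u 3 + 1/4)"
  "relu_layer 8 (decoder_layers ! 0) u 2 = max 0 (u 0)"
  "relu_layer 8 (decoder_layers ! 0) u 3 = max 0 (u 1)"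
  "relu_layer 8 (decoder_layers ! 0) u 4 = max 0 (u 2)"
  "relu_layer 8 (decoder_layers ! 0) u 5 = max 0 (u 3)"
  "relu_layer 8 (decoder_layers ! 1) u 0 = max 0 (u 0)"
  "relu_layer 8 (decoder_layers ! 1) u 1 = max 0 (- u 1 - 3/4 * u 2 + 3/4 * u 3 + 3/4)"
  "relu_layer 8 (decoder_layers ! 1) u 2 = max 0 (u 1 + 3/4 * u 2 - 3/4 * u 3 - 3/4)"
  "relu_layer 8 (decoder_layers ! 1) u 3 = max 0 (- u 1 + 1/4 * u 2 - 1/4 * u 3 - u 4 + u 5 - 1/4)"
  "relu_layer 8 (decoder_layers ! 2) u 0 = max 0 (u 0)"
  "relu_layer 8 (decoder_layers ! 2) u 1 = max 0 (u 1 - u 2 - u 3)"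
  by (simp_all add: decoder_layers_def relu_layer_8 mat_of_rows_def vec_of_list_def algebra_simps)

lemma affine_map_readout:
  "affine_map 8 readout_matrix readout_bias u = (\<lambda>i. if i = 0 then 1 - u 0 else if i = 1 then u 1 else 0)"
  by (auto simp: fun_eq_iff affine_map_def sum_lessThan_8 readout_matrix_def readout_bias_def
      mat_of_rows_def vec_of_list_def nth_Cons')

lemma readout_decoder_layers:
  "affine_map 8 readout_matrix readout_bias (fold (relu_layer 8) decoder_layers (relu_features p))
   = coords (E_of_diamond p)"
proof -
  obtain c s where p: "p = (c, s)"
    by fastforce
  define a where "a = 3 * (1 - c) / 4"
  define b where "b = (2 + 3 * s) / 4"
  define m where "m = a - max 0 (a - b)"
  define u where "u = relu_layer 8 (decoder_layers ! 0) (relu_features (c, s))"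
  define v where "v = relu_layer 8 (decoder_layers ! 1) u"
  define w where "w = relu_layer 8 (decoder_layers ! 2) v"
  have c: "max 0 c - max 0 (- c) = c" and s: "max 0 s - max 0 (- s) = s"
    by (simp_all add: max_0_sub_max_0_neg)
  have "3/4 * max 0 c - 3/4 * max 0 (- c) + 1/4 = 1 - a"
    and "- 3/4 * max 0 c + 3/4 * max 0 (- c) - 3/4 * max 0 s + 3/4 * max 0 (- s) + 1/4 = a - b"
    using c s by (simp_all add: a_def b_def field_simps)
  then have u: "u 0 = max 0 (1 - a)" "u 1 = max 0 (a - b)" "u 2 - u 3 = c" "u 4 - u 5 = s"
    using c s unfolding u_def decoder_layer_values relu_features_values by simp_all
  have "- u 1 - 3/4 * u 2 + 3/4 * u 3 + 3/4 = m"
    and "u 1 + 3/4 * u 2 - 3/4 * u 3 - 3/4 = - m"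
    and "- u 1 + 1/4 * u 2 - 1/4 * u 3 - u 4 + u 5 - 1/4 = m - (1 - c + s)"
    using u by (simp_all add: m_def a_def field_simps)
  then have v: "v 0 = max 0 (1 - a)" "v 1 = max 0 m" "v 2 = max 0 (- m)" "v 3 = max 0 (m - (1 - c + s))"
    using u unfolding v_def decoder_layer_values by simp_all
  have "v 1 - v 2 - v 3 = min m (1 - c + s)"
    using v max_0_sub_max_0_neg[of m] by (simp add: min_eq_sub_max_0[of m])
  then have w: "w 0 = max 0 (1 - a)" "w 1 = max 0 (min m (1 - c + s))"
    using v unfolding w_def decoder_layer_values by simp_all
  have "fold (relu_layer 8) decoder_layers (relu_features (c, s)) = w"
    by (simp add: w_def v_def u_def decoder_layers_def)
  moreover have "coords (E_of_diamond (c, s)) =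
      (\<lambda>i. if i = 0 then 1 - max 0 (1 - a) else if i = 1 then max 0 (min m (1 - c + s)) else 0)"
    by (auto simp: fun_eq_iff coords_def E_of_diamond_def m_def a_def b_def min_eq_sub_max_0)
  ultimately show ?thesis
    unfolding p by (simp only: affine_map_readout w)
qed

definition E_orbit_layers :: "nat \<Rightarrow> ((nat \<Rightarrow> nat \<Rightarrow> real) \<times> (nat \<Rightarrow> real)) list" where
  "E_orbit_layers n = encoder_layers @ replicate n double_layer @ decoder_layers"

lemma relu_net_E_orbit_layers:
  assumes "t \<in> {0..1}"
  shows "relu_net 1 8 2 (E_orbit_layers n) readout_matrix readout_bias (\<lambda>_. t) =
         coords (E_map ((r_map ^^ n) t))"
proof -
  have doubling: "(relu_layer 8 double_layer ^^ n) (relu_features p) =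
                  relu_features ((diamond_double ^^ n) p)" for p
    by (rule funpow_semiconj[where S = UNIV]) (simp_all add: relu_layer_double_layer)
  have "encoder_layers \<noteq> []"
    by (simp add: encoder_layers_def)
  have "hidden_eval 1 8 (E_orbit_layers n) (\<lambda>_. t) =
      fold (relu_layer 8) (replicate n double_layer @ decoder_layers) (relu_features (diamond t))"
    by (simp only: E_orbit_layers_def hidden_eval_append[OF \<open>encoder_layers \<noteq> []\<close>]
        hidden_eval_encoder_layers[OF assms] hidden_eval_eq_fold)
  also have "\<dots> = fold (relu_layer 8) decoder_layers (relu_features ((diamond_double ^^ n) (diamond t)))"
    by (simp add: doubling)
  also have "\<dots> = fold (relu_layer 8) decoder_layers (relu_features (diamond ((r_map ^^ n) t)))"
    using funpow_semiconj[OF _ r_map_image assms, of diamond_double diamond] diamond_double_diamond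
    by simp
  finally have hidden: "hidden_eval 1 8 (E_orbit_layers n) (\<lambda>_. t) =
      fold (relu_layer 8) decoder_layers (relu_features (diamond ((r_map ^^ n) t)))" .
  have "(r_map ^^ n) t \<in> {0..1}"
    using funpow_image_subset[OF r_map_image assms] .
  moreover have "E_orbit_layers n \<noteq> []"
    by (simp add: E_orbit_layers_def encoder_layers_def)
  ultimately show ?thesis
    unfolding relu_net_def hidden
    by (intro ext) (simp add: readout_decoder_layers E_of_diamond_diamond coords_def)
qed

lemma E_orbit_network:
  "\<exists>g \<in> Upsilon 8 (n + 5) 1 2. \<forall>t\<in>{0..1}. g (\<lambda>_. t) = coords (E_map ((r_map ^^ n) t))"
proof -
  have "length (E_orbit_layers n) = n + 5"
    by (simp add: E_orbit_layers_def encoder_layers_def decoder_layers_def)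
  then show ?thesis
    unfolding Upsilon_def using relu_net_E_orbit_layers by blast
qed

lemma input2_eq_stack: "input2 x y = stack 1 (\<lambda>_. x) (\<lambda>_. y)"
  by (auto simp: fun_eq_iff input2_def stack_def)

lemma z_n_eq_stack: "z_n F n x y = stack 2 (coords ((F ^^ n) (E_map x))) (coords ((F ^^ n) (E_map y)))"
  by (auto simp: fun_eq_iff z_n_def stack_def coords_def)

theorem mainTheorem7:
  fixes k :: nat
  shows "\<exists>C0 C1 :: nat. C0 > 0 \<and> C1 > 0 \<and>
    (\<forall>F :: real^2 \<Rightarrow> real^2.
       cpwl_pieces F k \<and> (\<forall>t\<in>{0..1}. F (E_map t) = E_map (r_map t)) \<longrightarrow>
       (\<forall>n::nat. n \<ge> 1 \<longrightarrow>
          (\<exists>g \<in> Upsilon C0 (C1 * n) 2 4.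
             \<forall>x\<in>{0..1}. \<forall>y\<in>{0..1}. g (input2 x y) = z_n F n x y)))"
proof -
  have "\<exists>h \<in> Upsilon 16 (6 * n) 2 4. \<forall>x\<in>{0..1}. \<forall>y\<in>{0..1}. h (input2 x y) = z_n F n x y"
    if semiconj: "\<forall>t\<in>{0..1}. F (E_map t) = E_map (r_map t)" and "n \<ge> 1"
    for F :: "real^2 \<Rightarrow> real^2" and n :: nat
  proof -
    obtain g where "g \<in> Upsilon 8 (n + 5) 1 2"
      and g: "\<forall>t\<in>{0..1}. g (\<lambda>_. t) = coords (E_map ((r_map ^^ n) t))"
      using E_orbit_network by blast
    then have "g \<in> Upsilon 8 (6 * n) 1 2"
      using Upsilon_depth_mono[of "n + 5" "6 * n" 8 1 2] \<open>n \<ge> 1\<close> by auto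
    then obtain h where "h \<in> Upsilon 16 (6 * n) 2 4" and h: "\<forall>u v. h (stack 1 u v) = stack 2 (g u) (g v)"
      using Upsilon_parallel[of g 8 "6 * n" 1 2] by auto
    moreover have "h (input2 x y) = z_n F n x y" if "x \<in> {0..1}" "y \<in> {0..1}" for x y
      using that h g funpow_semiconj[OF semiconj r_map_image]
      by (simp add: input2_eq_stack z_n_eq_stack)
    ultimately show ?thesis
      by blast
  qed
  then show ?thesis
    by (intro exI[of _ 16] exI[of _ 6]) auto
qed

end
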